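(* Let $\Sigma=\{a\}$, $k=4$, and $\alpha=\big((_1\,\backslash4\,a)_1\,(_2\,\backslash3)_2\,(_3\,\backslash2\,a)_3\,(_4\,\backslash1\,\backslash3)_4\big)^\ast$. Then $L(\alpha)=\{a^{n(n+7)(2n+1)/6} : n\in\mathbb{N}\}$.
   Context: For $k\ge1$, $[k]=\{1,\dots,k\}$, $B_k=\{[_i,\,]_i:i\in[k]\}$ fresh brackets; $g$ fixes letters of $\Sigma$ and erases brackets. $\mathcal{R}_k(\alpha)$: the regular language over $\Sigma\uplus B_k\uplus[k]$ obtained by reading the rewb $\alpha$ as a regular expression with $\backslash i$ as the letter $i$ and $(_i\alpha_0)_i$ as $[_i\mathcal{R}_k(\alpha_0)]_i$. Dereferencing $\mathcal{D}_k$: repeatedly take the leftmost number $i\in[k]$ in the current string; if no $[_i$ lies to its left delete it (unbound references denote $\varepsilon$); else take the nearest $[_i$ to its left; if no $]_i$ lies between them the result is undefined; else replace this $i$ by $g(u)$, $u$ the string strictly between that $[_i$ and the first subsequent $]_i$; when no numbers remain delete all brackets. $L(\alpha)=\{\mathcal{D}_k(v):v\in\mathcal{R}_k(\alpha)\}$. *)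

theory Defs
  imports Main
begin

(* Symbols of the extended alphabet  Sigma (+) B_k (+) [k] *)
datatype 'a sym = Letter 'a | Opn nat | Cls nat | Ref nat

(* regular expressions with backreferences (rewbs) *)
datatype 'a rewb =
    Empty
  | Eps
  | Lit 'a
  | Conc "'a rewb" "'a rewb"
  | Alt "'a rewb" "'a rewb"
  | Star "'a rewb"
  | Grp nat "'a rewb"
  | BRef nat

definition lstar :: "'b list set \<Rightarrow> 'b list set" where
  "lstar A = {concat ws | ws. set ws \<subseteq> A}"

fun RL :: "'a rewb \<Rightarrow> 'a sym list set" where
  "RL Empty = {}"
| "RL Eps = {[]}"
| "RL (Lit x) = {[Letter x]}"
| "RL (Conc r s) = {u @ v | u v. u \<in> RL r \<and> v \<in> RL s}"
| "RL (Alt r s) = RL r \<union> RL s"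
| "RL (Star r) = lstar (RL r)"
| "RL (Grp i r) = {[Opn i] @ w @ [Cls i] | w. w \<in> RL r}"
| "RL (BRef i) = {[Ref i]}"

fun g :: "'a sym list \<Rightarrow> 'a list" where
  "g [] = []"
| "g (Letter x # w) = x # g w"
| "g (_ # w) = g w"

fun isRef :: "'a sym \<Rightarrow> bool" where
  "isRef (Ref _) = True"
| "isRef _ = False"

fun refnum :: "'a sym \<Rightarrow> nat" where
  "refnum (Ref i) = i"
| "refnum _ = 0"

definition nrefs :: "'a sym list \<Rightarrow> nat" where
  "nrefs v = length (filter isRef v)"

lemma nrefs_g [simp]: "nrefs (map Letter (g u)) = 0"
  by (induction u rule: g.induct) (auto simp: nrefs_def)

lemma nrefs_append [simp]: "nrefs (u @ v) = nrefs u + nrefs v"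
  by (simp add: nrefs_def)

lemma find_idx_less:
  assumes "find (\<lambda>j. isRef (v ! j)) [0..<length v] = Some p"
  shows "p < length v" "isRef (v ! p)"
  using assms by (auto simp: find_Some_iff)

lemma nrefs_split:
  assumes "p < length v" "isRef (v ! p)"
  shows "nrefs v = Suc (nrefs (take p v) + nrefs (drop (Suc p) v))"
proof -
  have "v = take p v @ [v ! p] @ drop (Suc p) v"
    using assms(1) by (simp add: id_take_nth_drop)
  then have "nrefs v = nrefs (take p v @ [v ! p] @ drop (Suc p) v)" by simp
  also have "\<dots> = Suc (nrefs (take p v) + nrefs (drop (Suc p) v))"
    using assms(2) by (simp add: nrefs_def)
  finally show ?thesis .
qed

(* Dereferencing D_k (None = undefined).  Step: take the leftmost number i
   (at position p); pre = prefix to its left, post = suffix to its right. *)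
function deref :: "'a sym list \<Rightarrow> 'a list option" where
  "deref v =
    (case find (\<lambda>j. isRef (v ! j)) [0..<length v] of
       None \<Rightarrow> Some (g v)
     | Some p \<Rightarrow>
        (let i = refnum (v ! p); pre = take p v; post = drop (Suc p) v in
         if Opn i \<notin> set pre then deref (pre @ post)
         else
           (let q = (GREATEST q. q < length pre \<and> pre ! q = Opn i);
                between = drop (Suc q) pre in
            if Cls i \<notin> set between then None
            else deref (pre @ map Letter (g (takeWhile (\<lambda>s. s \<noteq> Cls i) between)) @ post))))"
  by pat_completeness auto
termination
  apply (relation "measure nrefs")
    apply simp
   apply (simp add: Let_def)
   apply (frule find_idx_less(1), drule find_idx_less(2))
   apply (drule (1) nrefs_split, simp)
  apply (simp add: Let_def)
  apply (frule find_idx_less(1), drule find_idx_less(2))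
  apply (drule (1) nrefs_split, simp)
  done

definition lang :: "'a rewb \<Rightarrow> 'a list set" where
  "lang r = {w. \<exists>v \<in> RL r. deref v = Some w}"

datatype sigma = a

definition alpha11 :: "sigma rewb" where
  "alpha11 = Star
     (Conc (Grp 1 (Conc (BRef 4) (Lit a)))
     (Conc (Grp 2 (BRef 3))
     (Conc (Grp 3 (Conc (BRef 2) (Lit a)))
           (Grp 4 (Conc (BRef 1) (BRef 3))))))"

end

theory Submission
  imports Defs
begin

text \<open>
  The body of the star denotes a single word, so \<open>\<R>\<^sub>4(\<alpha>)\<close> consists of its powers.
  Dereferencing resolves the references left to right; each reference reads the group
  just closed before it (in the same or the previous copy of the body), so after the
  first \<open>j\<close> copies the four groups of copy \<open>j+1\<close> hold
  \<open>f\<^sub>j + 1, j, j + 1, f\<^sub>j\<^sub>+\<^sub>1\<close> letters, where \<open>f\<^sub>0 = 0\<close> and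
  \<open>f\<^sub>j\<^sub>+\<^sub>1 = f\<^sub>j + j + 2\<close>, i.e. \<open>2 f\<^sub>j = j (j + 3)\<close>. Copy \<open>j+1\<close> thus contributes
  \<open>j\<^sup>2 + 6 j + 4\<close> letters, and summing gives \<open>n (n + 7) (2 n + 1) / 6\<close>.
\<close>

definition ref_free :: "'a sym list \<Rightarrow> bool" where
  "ref_free v \<longleftrightarrow> (\<forall>x\<in>set v. \<not> isRef x)"

lemma ref_free_simps [simp]:
  "ref_free []"
  "ref_free (x # xs) \<longleftrightarrow> \<not> isRef x \<and> ref_free xs"
  "ref_free (xs @ ys) \<longleftrightarrow> ref_free xs \<and> ref_free ys"
  "ref_free (replicate n x) \<longleftrightarrow> n = 0 \<or> \<not> isRef x"
  by (auto simp: ref_free_def)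

lemma g_append [simp]: "g (xs @ ys) = g xs @ g ys"
  by (induction xs rule: g.induct) auto

lemma g_replicate_Letter [simp]: "g (replicate n (Letter x)) = replicate n x"
  by (induction n) auto

lemma find_first_Ref:
  assumes "ref_free P"
  shows "find (\<lambda>j. isRef ((P @ Ref i # S) ! j)) [0..<length (P @ Ref i # S)] = Some (length P)"
proof -
  have "\<forall>j<length P. \<not> isRef (P ! j)"
    using assms nth_mem unfolding ref_free_def by blast
  then show ?thesis by (auto simp: find_Some_iff nth_append)
qed

lemma find_Ref_ref_free: "ref_free v \<Longrightarrow> find (\<lambda>j. isRef (v ! j)) [0..<length v] = None"
  using nth_mem unfolding ref_free_def by (auto simp: find_None_iff)

lemma deref_ref_free: "ref_free v \<Longrightarrow> deref v = Some (g v)"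
  by (subst deref.simps) (simp add: find_Ref_ref_free)

lemma deref_Ref_unbound:
  assumes "ref_free P" "Opn i \<notin> set P"
  shows "deref (P @ Ref i # S) = deref (P @ S)"
  by (subst deref.simps[of "P @ Ref i # S"])
    (simp only: find_first_Ref[OF assms(1)] option.case Let_def, simp add: assms)

lemma Greatest_last_Opn:
  assumes "Opn i \<notin> set Q"
  shows "(GREATEST q. q < length (P @ Opn i # Q) \<and> (P @ Opn i # Q) ! q = Opn i) = length P"
proof (rule Greatest_equality)
  fix q assume q: "q < length (P @ Opn i # Q) \<and> (P @ Opn i # Q) ! q = Opn i"
  show "q \<le> length P"
  proof (rule ccontr)
    assume "\<not> q \<le> length P"
    then obtain k where "q = Suc (length P) + k"
      by (metis le_iff_add not_less_eq_eq)
    with q have "Q ! k = Opn i" "k < length Q"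
      by (auto simp: nth_append)
    with assms show False by (metis nth_mem)
  qed
qed simp

lemma drop_Suc_length: "drop (Suc (length xs)) (xs @ y # ys) = ys"
  by simp

lemma deref_Ref_bound:
  assumes "ref_free P1" "ref_free W" "ref_free P2"
    and "Opn i \<notin> set W" "Opn i \<notin> set P2" "Cls i \<notin> set W"
  shows "deref (P1 @ Opn i # W @ Cls i # P2 @ Ref i # S)
       = deref (P1 @ Opn i # W @ Cls i # P2 @ map Letter (g W) @ S)"
proof -
  let ?P = "P1 @ Opn i # W @ Cls i # P2"
  have find: "find (\<lambda>j. isRef ((?P @ Ref i # S) ! j)) [0..<length (?P @ Ref i # S)]
      = Some (length ?P)"
    by (rule find_first_Ref) (simp add: assms)
  have greatest: "(GREATEST q. q < length ?P \<and> ?P ! q = Opn i) = length P1"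
    using Greatest_last_Opn[of i "W @ Cls i # P2" P1] assms by simp
  have take_group: "takeWhile (\<lambda>s. s \<noteq> Cls i) (W @ Cls i # P2) = W"
    using assms(6) by (induction W) auto
  have take_P: "take (length ?P) (?P @ Ref i # S) = ?P"
    by simp
  \<comment> \<open>The equation of \<open>deref\<close> is a simp rule and would unfold both sides, hence \<open>simp only\<close>.\<close>
  have "deref (?P @ Ref i # S) = deref (?P @ map Letter (g W) @ S)"
    by (subst deref.simps[of "?P @ Ref i # S"])
      (simp only: find option.case Let_def nth_append_length take_P refnum.simps
        greatest drop_Suc_length take_group, simp)
  then show ?thesis by simp
qed

lemma lstar_singleton: "lstar {w} = {concat (replicate n w) | n. True}"
proof -
  have "set ws \<subseteq> {w} \<longleftrightarrow> ws = replicate (length ws) w" for ws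
    by (auto simp: subset_iff intro: replicate_length_same[symmetric] dest: arg_cong[where f = set])
  then show ?thesis
    unfolding lstar_def by (metis (no_types, lifting) length_replicate)
qed

abbreviation letters :: "nat \<Rightarrow> sigma sym list" where
  "letters n \<equiv> replicate n (Letter a)"

definition body :: "sigma sym list" where
  "body = [Opn 1, Ref 4, Letter a, Cls 1, Opn 2, Ref 3, Cls 2,
           Opn 3, Ref 2, Letter a, Cls 3, Opn 4, Ref 1, Ref 3, Cls 4]"

lemma RL_alpha11: "RL alpha11 = {concat (replicate n body) | n. True}"
proof -
  have "RL (Conc (Grp 1 (Conc (BRef 4) (Lit a)))
       (Conc (Grp 2 (BRef 3))
       (Conc (Grp 3 (Conc (BRef 2) (Lit a)))
             (Grp 4 (Conc (BRef 1) (BRef 3)))))) = {body}"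
    by (simp add: body_def)
  then show ?thesis
    by (simp add: alpha11_def lstar_singleton)
qed

definition filled :: "nat \<Rightarrow> nat \<Rightarrow> nat \<Rightarrow> nat \<Rightarrow> sigma sym list" where
  "filled y1 y2 y3 y4 = Opn 1 # letters y1 @ Cls 1 # Opn 2 # letters y2 @ Cls 2 #
     Opn 3 # letters y3 @ Cls 3 # Opn 4 # letters y4 @ [Cls 4]"

lemma ref_free_filled [simp]: "ref_free (filled y1 y2 y3 y4)"
  by (simp add: filled_def)

lemma deref_body_first: "deref (body @ S) = deref (filled 1 0 1 2 @ S)"
proof -
  have 1: "deref ([Opn 1] @ Ref 4 # Letter a # Cls 1 # Opn 2 # Ref 3 # Cls 2 # Opn 3 # Ref 2 #
        Letter a # Cls 3 # Opn 4 # Ref 1 # Ref 3 # Cls 4 # S)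
     = deref ([Opn 1] @ Letter a # Cls 1 # Opn 2 # Ref 3 # Cls 2 # Opn 3 # Ref 2 #
        Letter a # Cls 3 # Opn 4 # Ref 1 # Ref 3 # Cls 4 # S)"
    by (rule deref_Ref_unbound) auto
  have 2: "deref ([Opn 1, Letter a, Cls 1, Opn 2] @ Ref 3 # Cls 2 # Opn 3 # Ref 2 #
        Letter a # Cls 3 # Opn 4 # Ref 1 # Ref 3 # Cls 4 # S)
     = deref ([Opn 1, Letter a, Cls 1, Opn 2] @ Cls 2 # Opn 3 # Ref 2 #
        Letter a # Cls 3 # Opn 4 # Ref 1 # Ref 3 # Cls 4 # S)"
    by (rule deref_Ref_unbound) auto
  have 3: "deref ([Opn 1, Letter a, Cls 1] @ Opn 2 # [] @ Cls 2 # [Opn 3] @ Ref 2 #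
        Letter a # Cls 3 # Opn 4 # Ref 1 # Ref 3 # Cls 4 # S)
     = deref ([Opn 1, Letter a, Cls 1] @ Opn 2 # [] @ Cls 2 # [Opn 3] @ map Letter (g []) @
        Letter a # Cls 3 # Opn 4 # Ref 1 # Ref 3 # Cls 4 # S)"
    by (rule deref_Ref_bound) auto
  have 4: "deref ([] @ Opn 1 # [Letter a] @ Cls 1 # [Opn 2, Cls 2, Opn 3, Letter a, Cls 3, Opn 4] @
        Ref 1 # Ref 3 # Cls 4 # S)
     = deref ([] @ Opn 1 # [Letter a] @ Cls 1 # [Opn 2, Cls 2, Opn 3, Letter a, Cls 3, Opn 4] @
        map Letter (g [Letter a]) @ Ref 3 # Cls 4 # S)"
    by (rule deref_Ref_bound) auto
  have 5: "deref ([Opn 1, Letter a, Cls 1, Opn 2, Cls 2] @ Opn 3 # [Letter a] @ Cls 3 #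
        [Opn 4, Letter a] @ Ref 3 # Cls 4 # S)
     = deref ([Opn 1, Letter a, Cls 1, Opn 2, Cls 2] @ Opn 3 # [Letter a] @ Cls 3 #
        [Opn 4, Letter a] @ map Letter (g [Letter a]) @ Cls 4 # S)"
    by (rule deref_Ref_bound) auto
  show ?thesis
    using 1 2 3 4 5 by (simp add: body_def filled_def numeral_eq_Suc)
qed

lemma deref_body_after_filled:
  assumes "ref_free Q"
  shows "deref (Q @ filled y1 y2 y3 y4 @ body @ S)
       = deref (Q @ filled y1 y2 y3 y4 @ filled (Suc y4) y3 (Suc y3) (y4 + y3 + 2) @ S)"
proof -
  let ?A = "Q @ Opn 1 # letters y1 @ Cls 1 # Opn 2 # letters y2 @ Cls 2 #
    Opn 3 # letters y3 @ [Cls 3]"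
  let ?C = "Q @ filled y1 y2 y3 y4"
  have 1: "deref (?A @ Opn 4 # letters y4 @ Cls 4 # [Opn 1] @ Ref 4 # Letter a # Cls 1 #
        Opn 2 # Ref 3 # Cls 2 # Opn 3 # Ref 2 # Letter a # Cls 3 # Opn 4 # Ref 1 # Ref 3 # Cls 4 # S)
    = deref (?A @ Opn 4 # letters y4 @ Cls 4 # [Opn 1] @ map Letter (g (letters y4)) @ Letter a #
        Cls 1 # Opn 2 # Ref 3 # Cls 2 # Opn 3 # Ref 2 # Letter a # Cls 3 # Opn 4 # Ref 1 # Ref 3 #
        Cls 4 # S)"
    by (rule deref_Ref_bound) (auto simp: assms)
  have 2: "deref ((Q @ Opn 1 # letters y1 @ Cls 1 # Opn 2 # letters y2 @ [Cls 2]) @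
        Opn 3 # letters y3 @ Cls 3 # (Opn 4 # letters y4 @ Cls 4 # Opn 1 # letters y4 @
        [Letter a, Cls 1, Opn 2]) @ Ref 3 # Cls 2 # Opn 3 # Ref 2 # Letter a # Cls 3 #
        Opn 4 # Ref 1 # Ref 3 # Cls 4 # S)
    = deref ((Q @ Opn 1 # letters y1 @ Cls 1 # Opn 2 # letters y2 @ [Cls 2]) @
        Opn 3 # letters y3 @ Cls 3 # (Opn 4 # letters y4 @ Cls 4 # Opn 1 # letters y4 @
        [Letter a, Cls 1, Opn 2]) @ map Letter (g (letters y3)) @ Cls 2 # Opn 3 # Ref 2 #
        Letter a # Cls 3 # Opn 4 # Ref 1 # Ref 3 # Cls 4 # S)"
    by (rule deref_Ref_bound) (auto simp: assms)
  have 3: "deref ((?C @ Opn 1 # letters y4 @ [Letter a, Cls 1]) @ Opn 2 # letters y3 @ Cls 2 #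
        [Opn 3] @ Ref 2 # Letter a # Cls 3 # Opn 4 # Ref 1 # Ref 3 # Cls 4 # S)
    = deref ((?C @ Opn 1 # letters y4 @ [Letter a, Cls 1]) @ Opn 2 # letters y3 @ Cls 2 #
        [Opn 3] @ map Letter (g (letters y3)) @ Letter a # Cls 3 # Opn 4 # Ref 1 # Ref 3 #
        Cls 4 # S)"
    by (rule deref_Ref_bound) (auto simp: assms)
  have 4: "deref (?C @ Opn 1 # (letters y4 @ [Letter a]) @ Cls 1 # (Opn 2 # letters y3 @
        Cls 2 # Opn 3 # letters y3 @ [Letter a, Cls 3, Opn 4]) @ Ref 1 # Ref 3 # Cls 4 # S)
    = deref (?C @ Opn 1 # (letters y4 @ [Letter a]) @ Cls 1 # (Opn 2 # letters y3 @
        Cls 2 # Opn 3 # letters y3 @ [Letter a, Cls 3, Opn 4]) @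
        map Letter (g (letters y4 @ [Letter a])) @ Ref 3 # Cls 4 # S)"
    by (rule deref_Ref_bound) (auto simp: assms)
  have 5: "deref ((?C @ Opn 1 # letters y4 @ Letter a # Cls 1 # Opn 2 # letters y3 @ [Cls 2]) @
        Opn 3 # (letters y3 @ [Letter a]) @ Cls 3 # (Opn 4 # letters y4 @ [Letter a]) @
        Ref 3 # Cls 4 # S)
    = deref ((?C @ Opn 1 # letters y4 @ Letter a # Cls 1 # Opn 2 # letters y3 @ [Cls 2]) @
        Opn 3 # (letters y3 @ [Letter a]) @ Cls 3 # (Opn 4 # letters y4 @ [Letter a]) @
        map Letter (g (letters y3 @ [Letter a])) @ Cls 4 # S)"
    by (rule deref_Ref_bound) (auto simp: assms)
  have next_block: "filled (Suc y4) y3 (Suc y3) (y4 + y3 + 2)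
      = Opn 1 # (letters y4 @ [Letter a]) @ Cls 1 # Opn 2 # letters y3 @ Cls 2 #
        Opn 3 # (letters y3 @ [Letter a]) @ Cls 3 #
        Opn 4 # (letters y4 @ [Letter a]) @ (letters y3 @ [Letter a]) @ [Cls 4]"
    by (simp add: filled_def replicate_add replicate_append_same numeral_eq_Suc)
  show ?thesis
    unfolding next_block using 1 2 3 4 5 by (simp add: body_def filled_def)
qed

fun fourth_len :: "nat \<Rightarrow> nat" where
  "fourth_len 0 = 0"
| "fourth_len (Suc j) = fourth_len j + j + 2"

fun filled_prefix :: "nat \<Rightarrow> sigma sym list" where
  "filled_prefix 0 = []"
| "filled_prefix (Suc j) =
     filled_prefix j @ filled (Suc (fourth_len j)) j (Suc j) (fourth_len (Suc j))"

lemma ref_free_filled_prefix: "ref_free (filled_prefix n)"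
  by (induction n) auto

lemma deref_filled_prefix_body:
  "deref (filled_prefix j @ body @ S) = deref (filled_prefix (Suc j) @ S)"
proof (cases j)
  case 0
  then show ?thesis
    using deref_body_first[of S] by (simp add: numeral_eq_Suc)
next
  case (Suc k)
  let ?f = "\<lambda>j. filled (Suc (fourth_len j)) j (Suc j) (fourth_len (Suc j))"
  have "filled_prefix j = filled_prefix k @ ?f k"
    and "filled_prefix (Suc j) = filled_prefix k @ ?f k @ ?f (Suc k)"
    using Suc by (simp_all add: add.commute)
  then show ?thesis
    using deref_body_after_filled[OF ref_free_filled_prefix, of k] by (simp del: deref.simps)
qed

lemma deref_filled_prefix_power:
  "deref (filled_prefix j @ concat (replicate n body)) = deref (filled_prefix (j + n))"
proof (induction n arbitrary: j)
  case (Suc n)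
  have "deref (filled_prefix j @ concat (replicate (Suc n) body))
      = deref (filled_prefix (Suc j) @ concat (replicate n body))"
    using deref_filled_prefix_body[of j] by simp
  then show ?case
    using Suc.IH[of "Suc j"] by simp
qed simp

lemma fourth_len_closed: "2 * fourth_len j = j * (j + 3)"
  by (induction j) (auto simp: algebra_simps)

lemma length_g_filled_prefix: "6 * length (g (filled_prefix n)) = n * (n + 7) * (2 * n + 1)"
proof (induction n)
  case (Suc n)
  have "6 * length (g (filled_prefix (Suc n)))
      = 6 * length (g (filled_prefix n)) + 6 * (2 * fourth_len n) + 18 * n + 24"
    by (simp add: filled_def)
  also have "\<dots> = Suc n * (Suc n + 7) * (2 * Suc n + 1)"
    by (simp only: Suc.IH fourth_len_closed) (simp add: algebra_simps)
  finally show ?case .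
qed simp

lemma sigma_list_eq_replicate: "(w :: sigma list) = replicate (length w) a"
  by (metis sigma.exhaust replicate_length_same)

theorem mainTheorem11:
  shows "lang alpha11 = {replicate (n * (n + 7) * (2 * n + 1) div 6) a | n :: nat. True}"
proof -
  have "deref (concat (replicate n body)) = Some (replicate (n * (n + 7) * (2 * n + 1) div 6) a)"
    for n
  proof -
    have "deref (concat (replicate n body)) = Some (g (filled_prefix n))"
      using deref_filled_prefix_power[of 0 n] deref_ref_free[OF ref_free_filled_prefix] by simp
    moreover have "length (g (filled_prefix n)) = n * (n + 7) * (2 * n + 1) div 6"
      using length_g_filled_prefix[of n] by simp
    ultimately show ?thesis
      by (metis sigma_list_eq_replicate)
  qed
  then show ?thesis
    unfolding lang_def RL_alpha11 by auto
qed

end
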